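(* Let $(\Omega,\mathcal F,\mu)$ be a measure space and $p\in[1,\infty)$. The following are equivalent: (i) the closed unit ball $B_{L^p(\Omega,\mathcal F,\mu)}=\{f:\|f\|_p\le1\}$ is uniformly approximable; (ii) $L^p(\Omega,\mathcal F,\mu)$ is finite dimensional; (iii) $\mu$ is atomic and has only a finite number of atoms of finite measure, up to measure $0$. Moreover, if these assertions are false, then $N_{p,\varepsilon}(B_{L^p(\Omega,\mathcal F,\mu)})=\infty$ for every $\varepsilon\in(0,1)$.
   Context: All measures are assumed not identically zero. For $k\ge1$, $\mathscr G_{p,k}$ is the set of functions $\sum_{i=1}^l a_i\mathbf 1_{A_i}$ belonging to $L^p(\Omega,\mathcal F,\mu)$ with $l\le k$, $\{A_i\}$ a measurable partition of $\Omega$, $a_i\in\mathbb R$. For $\mathscr A\subset L^p$ and $\varepsilon>0$, $N_{p,\varepsilon}(\mathscr A)=\inf\{k\ge1:\ \forall f\in\mathscr A\ \exists h\in\mathscr G_{p,k},\ \|f-h\|_p\le\varepsilon\}$ (with $\inf\emptyset=\infty$); $\mathscr A$ is uniformly approximable (UA) if $N_{p,\varepsilon}(\mathscr A)<\infty$ for all $\varepsilon>0$. An atom is a measurable $A$ with $\mu(A)>0$ such that every measurable $B\subset A$ with $\mu(B)<\mu(A)$ has $\mu(B)=0$. $\mu$ is atomic if every measurable set of positive measure contains an atom. $\mu$ has a finite number of atoms of finite measure up to measure $0$ if there is a finite (possibly empty) collection $\mathcal C$ of atoms of finite measure such that every atom $B$ either has $\mu(B)=\infty$ or satisfies $\mu(A\triangle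 B)=0$ for some $A\in\mathcal C$. *)

theory Defs
  imports "HOL-Analysis.Analysis" "HOL-Library.Extended_Nat"
begin

text \<open>Real-valued functions in L^p(M), 1 <= p < infinity (representatives; a.e. classes
  are handled by working with the seminorm).\<close>
definition Lp :: "'a measure \<Rightarrow> real \<Rightarrow> ('a \<Rightarrow> real) set" where
  "Lp M p = {f. f \<in> borel_measurable M \<and> (\<integral>\<^sup>+ x. ennreal (\<bar>f x\<bar> powr p) \<partial>M) < \<infinity>}"

definition Lp_norm :: "'a measure \<Rightarrow> real \<Rightarrow> ('a \<Rightarrow> real) \<Rightarrow> real" where
  "Lp_norm M p f = (enn2real (\<integral>\<^sup>+ x. ennreal (\<bar>f x\<bar> powr p) \<partial>M)) powr (1 / p)"

definition Lp_ball :: "'a measure \<Rightarrow> real \<Rightarrow> ('a \<Rightarrow> real) set" where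
  "Lp_ball M p = {f \<in> Lp M p. Lp_norm M p f \<le> 1}"

definition G_simple :: "'a measure \<Rightarrow> real \<Rightarrow> nat \<Rightarrow> ('a \<Rightarrow> real) set" where
  "G_simple M p k = {h \<in> Lp M p. \<exists>l A a. l \<le> k \<and> (\<forall>i<l. A i \<in> sets M)
      \<and> disjoint_family_on A {..<l} \<and> (\<Union>i<l. A i) = space M
      \<and> (\<forall>x\<in>space M. h x = (\<Sum>i<l. a i * indicator (A i) x))}"

definition N_approx :: "'a measure \<Rightarrow> real \<Rightarrow> real \<Rightarrow> ('a \<Rightarrow> real) set \<Rightarrow> enat" where
  "N_approx M p \<epsilon> S = (INF k \<in> {k::nat. k \<ge> 1 \<and>
      (\<forall>f\<in>S. \<exists>h\<in>G_simple M p k. Lp_norm M p (\<lambda>x. f x - h x) \<le> \<epsilon>)}. enat k)"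

definition unif_approx :: "'a measure \<Rightarrow> real \<Rightarrow> ('a \<Rightarrow> real) set \<Rightarrow> bool" where
  "unif_approx M p S \<longleftrightarrow> (\<forall>\<epsilon>>0. N_approx M p \<epsilon> S < \<infinity>)"

definition Lp_findim :: "'a measure \<Rightarrow> real \<Rightarrow> bool" where
  "Lp_findim M p \<longleftrightarrow> (\<exists>S. finite S \<and> S \<subseteq> Lp M p \<and>
      (\<forall>f\<in>Lp M p. \<exists>c. AE x in M. f x = (\<Sum>g\<in>S. c g * g x)))"

definition is_atom :: "'a measure \<Rightarrow> 'a set \<Rightarrow> bool" where
  "is_atom M A \<longleftrightarrow> A \<in> sets M \<and> emeasure M A > 0 \<and>
     (\<forall>B\<in>sets M. B \<subseteq> A \<and> emeasure M B < emeasure M A \<longrightarrow> emeasure M B = 0)"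

definition atomic_measure :: "'a measure \<Rightarrow> bool" where
  "atomic_measure M \<longleftrightarrow> (\<forall>A\<in>sets M. emeasure M A > 0 \<longrightarrow> (\<exists>B. B \<subseteq> A \<and> is_atom M B))"

definition finitely_many_finite_atoms :: "'a measure \<Rightarrow> bool" where
  "finitely_many_finite_atoms M \<longleftrightarrow> (\<exists>C. finite C \<and>
      (\<forall>A\<in>C. is_atom M A \<and> emeasure M A < \<infinity>) \<and>
      (\<forall>B. is_atom M B \<longrightarrow> emeasure M B = \<infinity> \<or>
             (\<exists>A\<in>C. emeasure M ((A - B) \<union> (B - A)) = 0)))"

end

theory Submission
  imports Defs "HOL-Library.Function_Algebras"
begin

text \<open>
  If \<open>\<mu>\<close> is atomic with finitely many finite atoms, every \<open>L\<^sup>p\<close> function is almost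
  everywhere constant on each of them, since an atom cannot be split, and vanishes almost
  everywhere outside them, since an \<open>L\<^sup>p\<close> function cannot charge an atom of infinite
  measure. So \<open>L\<^sup>p\<close> is spanned by the indicators of the (disjointified) finite atoms: it is
  finite dimensional, and every function is almost everywhere equal to a simple function with
  one more value than there are atoms.

  Otherwise there is a disjoint sequence of sets of finite positive measure: halve a set
  without atoms repeatedly, or pick infinitely many finite atoms that are pairwise not almost
  equal. Their indicators are linearly independent, so \<open>L\<^sup>p\<close> is infinite dimensional. Passing
  to a subsequence, or grouping consecutive sets into blocks, makes the measures of the sets
  pairwise separated by an arbitrary ratio. The step function with value \<open>v\<^sub>j\<close> on the
  \<open>j\<close>-th of \<open>m\<close> such sets, where \<open>v\<^sub>j\<^sup>p\<close> times its measure is \<open>1 / m\<close>, lies in the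
  unit ball; its values are so well separated that each value of a function with \<open>k\<close> values
  is relatively \<open>\<delta>\<close>-close to at most one of them, which puts it at distance at least
  \<open>\<delta> ((m - k) / m)\<^bsup>1/p\<^esup>\<close>. Letting \<open>m\<close> grow, \<open>N\<^sub>p\<^sub>,\<^sub>\<epsilon>\<close> of the ball is infinite for every \<open>\<epsilon> < 1\<close>.
\<close>

lemma sum_indicator_disjoint_family_on:
  fixes a :: "nat \<Rightarrow> 'b::semiring_1"
  assumes "disjoint_family_on A {..<l}" "i < l" "x \<in> A i"
  shows "(\<Sum>j<l. a j * indicator (A j) x) = a i"
proof -
  have "x \<notin> A j" if "j < l" "j \<noteq> i" for j
    using assms that unfolding disjoint_family_on_def by blast
  then have "(\<Sum>j<l. a j * indicator (A j) x) = (\<Sum>j<l. if j = i then a i else 0)"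
    using assms(3) by (intro sum.cong) auto
  then show ?thesis
    using assms(2) by simp
qed

lemma sum_indicator_outside:
  fixes a :: "nat \<Rightarrow> 'b::semiring_1"
  assumes "\<And>j. j < l \<Longrightarrow> x \<notin> A j"
  shows "(\<Sum>j<l. a j * indicator (A j) x) = 0"
  using assms by (intro sum.neutral) auto

section \<open>Indivisible sets\<close>

text \<open>Unlike atoms, indivisible sets pass to measurable subsets (\<open>indivisible_subset\<close>), so
  they survive the disjointification of a family of atoms.\<close>
definition indivisible :: "'a measure \<Rightarrow> 'a set \<Rightarrow> bool" where
  "indivisible M A \<longleftrightarrow> A \<in> sets M \<and>
     (\<forall>B\<in>sets M. B \<subseteq> A \<longrightarrow> B \<in> null_sets M \<or> A - B \<in> null_sets M)"

lemma is_atom_imp_indivisible: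
  assumes "is_atom M A" "emeasure M A < \<infinity>"
  shows "indivisible M A"
  unfolding indivisible_def
proof (intro conjI ballI impI)
  show A: "A \<in> sets M"
    using assms by (simp add: is_atom_def)
  fix B assume B: "B \<in> sets M" "B \<subseteq> A"
  show "B \<in> null_sets M \<or> A - B \<in> null_sets M"
  proof (cases "emeasure M B < emeasure M A")
    case True
    then show ?thesis
      using assms B unfolding is_atom_def by blast
  next
    case False
    then have "emeasure M B = emeasure M A"
      using emeasure_mono[OF B(2) A] by simp
    then have "emeasure M (A - B) = 0"
      using A B assms(2) by (simp add: emeasure_Diff diff_eq_0_iff_ennreal)
    then show ?thesis
      using A B by auto
  qed
qed

lemma indivisible_subset:
  assumes "indivisible M A" "B \<in> sets M" "B \<subseteq> A"
  shows "indivisible M B"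
  unfolding indivisible_def
proof (intro conjI ballI impI)
  fix C assume C: "C \<in> sets M" "C \<subseteq> B"
  then have "C \<in> null_sets M \<or> A - C \<in> null_sets M"
    using assms unfolding indivisible_def by blast
  moreover have "B - C \<subseteq> A - C"
    using assms(3) by blast
  ultimately show "C \<in> null_sets M \<or> B - C \<in> null_sets M"
    using assms(2) C(1) by (blast intro: null_sets_subset)
qed fact

lemma indivisible_level_dichotomy:
  fixes f :: "'a \<Rightarrow> real"
  assumes A: "indivisible M A" and f[measurable]: "f \<in> borel_measurable M"
  shows "{x\<in>space M. x \<in> A \<and> f x < q} \<in> null_sets M \<or> {x\<in>space M. x \<in> A \<and> q \<le> f x} \<in> null_sets M"
proof -
  let ?L = "{x\<in>space M. x \<in> A \<and> f x < q}"
  have [measurable]: "A \<in> sets M"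
    using A by (simp add: indivisible_def)
  have "?L \<in> sets M" "?L \<subseteq> A"
    by auto
  then have "?L \<in> null_sets M \<or> A - ?L \<in> null_sets M"
    using A unfolding indivisible_def by blast
  moreover have "A - ?L = {x\<in>space M. x \<in> A \<and> q \<le> f x}"
    using sets.sets_into_space[of A M] by auto
  ultimately show ?thesis
    by simp
qed

lemma bdd_above_null_lower_levels:
  fixes f :: "'a \<Rightarrow> real"
  assumes A[measurable]: "A \<in> sets M" "A \<notin> null_sets M" and f[measurable]: "f \<in> borel_measurable M"
  shows "bdd_above {q. {x\<in>space M. x \<in> A \<and> f x < q} \<in> null_sets M}"
proof (rule ccontr)
  let ?L = "\<lambda>q. {x\<in>space M. x \<in> A \<and> f x < q}"
  assume unbounded: "\<not> ?thesis"
  have "?L (real n) \<in> null_sets M" for n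
  proof -
    obtain z where z: "?L z \<in> null_sets M" "real n < z"
      using unbounded unfolding bdd_above_def by (metis (no_types, lifting) mem_Collect_eq not_le)
    have "?L (real n) \<subseteq> ?L z"
      using z(2) by auto
    then show ?thesis
      by (rule null_sets_subset[OF z(1), rotated]) measurable
  qed
  then have "(\<Union>n. ?L (real n)) \<in> null_sets M"
    by blast
  moreover have "A \<subseteq> (\<Union>n. ?L (real n))"
  proof
    fix x assume "x \<in> A"
    moreover obtain n :: nat where "f x < real n"
      using reals_Archimedean2 by blast
    ultimately show "x \<in> (\<Union>n. ?L (real n))"
      using sets.sets_into_space[OF A(1)] by (intro UN_I[of n]) auto
  qed
  ultimately show False
    using A by (meson null_sets_subset)
qed

lemma exists_null_lower_level:
  fixes f :: "'a \<Rightarrow> real"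
  assumes A: "A \<in> sets M" "A \<notin> null_sets M"
    and dichotomy: "\<And>q. {x\<in>space M. x \<in> A \<and> f x < q} \<in> null_sets M \<or>
      {x\<in>space M. x \<in> A \<and> q \<le> f x} \<in> null_sets M"
  shows "\<exists>q. {x\<in>space M. x \<in> A \<and> f x < q} \<in> null_sets M"
proof (rule ccontr)
  let ?U = "\<lambda>q. {x\<in>space M. x \<in> A \<and> q \<le> f x}"
  assume "\<not> ?thesis"
  then have "?U (- real n) \<in> null_sets M" for n
    using dichotomy by blast
  then have "(\<Union>n. ?U (- real n)) \<in> null_sets M"
    by blast
  moreover have "A \<subseteq> (\<Union>n. ?U (- real n))"
  proof
    fix x assume "x \<in> A"
    moreover obtain n :: nat where "- f x \<le> real n"
      using real_arch_simple by blast
    ultimately show "x \<in> (\<Union>n. ?U (- real n))"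
      using sets.sets_into_space[OF A(1)] by (intro UN_I[of n]) auto
  qed
  ultimately show False
    using A by (meson null_sets_subset)
qed

lemma neq_subset_levels:
  fixes f :: "'a \<Rightarrow> real"
  shows "{x\<in>S. \<not> (x \<in> A \<longrightarrow> f x = c)} \<subseteq>
    (\<Union>n. {x\<in>S. x \<in> A \<and> f x < c - 1 / Suc n}) \<union> (\<Union>n. {x\<in>S. x \<in> A \<and> c + 1 / Suc n \<le> f x})"
proof
  fix x assume "x \<in> {x\<in>S. \<not> (x \<in> A \<longrightarrow> f x = c)}"
  then have x: "x \<in> S" "x \<in> A" "f x \<noteq> c"
    by auto
  show "x \<in> (\<Union>n. {x\<in>S. x \<in> A \<and> f x < c - 1 / Suc n}) \<union> (\<Union>n. {x\<in>S. x \<in> A \<and> c + 1 / Suc n \<le> f x})"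
  proof (cases "f x < c")
    case True
    then obtain n where "1 / Suc n < c - f x"
      using reals_Archimedean by (metis diff_gt_0_iff_gt inverse_eq_divide)
    then have "x \<in> {x\<in>S. x \<in> A \<and> f x < c - 1 / Suc n}"
      using x by simp
    then show ?thesis
      by blast
  next
    case False
    then obtain n where "1 / Suc n < f x - c"
      using x(3) reals_Archimedean by (metis diff_gt_0_iff_gt inverse_eq_divide not_less_iff_gr_or_eq)
    then have "x \<in> {x\<in>S. x \<in> A \<and> c + 1 / Suc n \<le> f x}"
      using x by simp
    then show ?thesis
      by blast
  qed
qed

text \<open>The constant is the supremum of the levels below which \<open>f\<close> is almost never on \<open>A\<close>.\<close>
lemma indivisible_ae_const:
  fixes f :: "'a \<Rightarrow> real"
  assumes A: "indivisible M A" and f[measurable]: "f \<in> borel_measurable M"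
  shows "\<exists>c. AE x in M. x \<in> A \<longrightarrow> f x = c"
proof (cases "A \<in> null_sets M")
  case True
  then show ?thesis
    by (intro exI AE_I'[of A]) auto
next
  case A_pos: False
  have [measurable]: "A \<in> sets M"
    using A by (simp add: indivisible_def)
  define L where "L q = {x\<in>space M. x \<in> A \<and> f x < q}" for q
  define U where "U q = {x\<in>space M. x \<in> A \<and> q \<le> f x}" for q
  have L_or_U: "L q \<in> null_sets M \<or> U q \<in> null_sets M" for q
    unfolding L_def U_def by (rule indivisible_level_dichotomy[OF A f])
  define Z where "Z = {q. L q \<in> null_sets M}"
  have Z_ne: "Z \<noteq> {}"
    using exists_null_lower_level[OF _ A_pos L_or_U[unfolded L_def U_def]] by (auto simp: Z_def L_def)
  have Z_bdd: "bdd_above Z"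
    using bdd_above_null_lower_levels[OF _ A_pos f] by (simp add: Z_def L_def)
  define c where "c = Sup Z"
  have below: "L (c - 1 / Suc n) \<in> null_sets M" for n
  proof -
    obtain z where "z \<in> Z" "c - 1 / Suc n < z"
      using less_cSup_iff[OF Z_ne Z_bdd, of "c - 1 / Suc n"] by (auto simp: c_def)
    moreover have "L (c - 1 / Suc n) \<in> sets M"
      unfolding L_def by measurable
    ultimately show ?thesis
      by (auto simp: Z_def L_def intro: null_sets_subset)
  qed
  have above: "U (c + 1 / Suc n) \<in> null_sets M" for n
  proof -
    have "c + 1 / Suc n \<notin> Z"
      using cSup_upper[OF _ Z_bdd, of "c + 1 / Suc n"] by (auto simp: c_def)
    then show ?thesis
      using L_or_U by (auto simp: Z_def)
  qed
  have exceptional: "{x\<in>space M. \<not> (x \<in> A \<longrightarrow> f x = c)} \<subseteq>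
      (\<Union>n. L (c - 1 / Suc n)) \<union> (\<Union>n. U (c + 1 / Suc n))"
    unfolding L_def U_def by (rule neq_subset_levels)
  show ?thesis
    by (intro exI[of _ c] AE_I'[OF _ exceptional] null_sets.Un null_sets_UN below above)
qed

section \<open>Atomic measures with finitely many finite atoms\<close>

lemma Lp_level_set_finite:
  fixes f :: "'a \<Rightarrow> real"
  assumes f: "f \<in> Lp M p" and c: "c > 0"
  shows "emeasure M {x\<in>space M. c \<le> \<bar>f x\<bar> powr p} < \<infinity>"
proof -
  let ?S = "{x\<in>space M. c \<le> \<bar>f x\<bar> powr p}"
  have [measurable]: "f \<in> borel_measurable M"
    using f by (simp add: Lp_def)
  have "ennreal c * emeasure M ?S = (\<integral>\<^sup>+ x. ennreal c * indicator ?S x \<partial>M)"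
    by (simp add: nn_integral_cmult_indicator)
  also have "\<dots> \<le> (\<integral>\<^sup>+ x. ennreal (\<bar>f x\<bar> powr p) \<partial>M)"
    by (intro nn_integral_mono) (auto simp: indicator_def intro: ennreal_leI)
  also have "\<dots> < \<infinity>"
    using f by (simp add: Lp_def)
  finally have "emeasure M ?S = 0 \<or> emeasure M ?S < \<infinity>"
    using c by (simp add: ennreal_mult_less_top)
  then show ?thesis
    by auto
qed

lemma is_atom_infinite_imp_finite_subset_null:
  assumes "is_atom M B" "emeasure M B = \<infinity>" "D \<in> sets M" "D \<subseteq> B" "emeasure M D < \<infinity>"
  shows "D \<in> null_sets M"
  using assms unfolding is_atom_def by auto

lemma is_atom_in_Lp_support_finite:
  fixes f :: "'a \<Rightarrow> real"
  assumes p: "p > 0" and f: "f \<in> Lp M p" and B: "is_atom M B" "B \<subseteq> {x. f x \<noteq> 0}"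
  shows "emeasure M B < \<infinity>"
proof (rule ccontr)
  assume "\<not> emeasure M B < \<infinity>"
  then have inf: "emeasure M B = \<infinity>"
    by (simp add: less_top[symmetric])
  have [measurable]: "B \<in> sets M" "f \<in> borel_measurable M"
    using B f by (auto simp: is_atom_def Lp_def)
  define S where "S n = {x\<in>space M. 1 / Suc n \<le> \<bar>f x\<bar> powr p}" for n :: nat
  have "B \<inter> S n \<in> null_sets M" for n
    using Lp_level_set_finite[OF f, of "1 / Suc n"] emeasure_mono[of "B \<inter> S n" "S n" M]
    by (intro is_atom_infinite_imp_finite_subset_null[OF B(1) inf])
       (auto simp: S_def intro: le_less_trans)
  then have "(\<Union>n. B \<inter> S n) \<in> null_sets M"
    by blast
  moreover have "B \<subseteq> (\<Union>n. B \<inter> S n)"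
  proof
    fix x assume x: "x \<in> B"
    then have "\<bar>f x\<bar> powr p > 0"
      using B(2) by auto
    then obtain n where "1 / Suc n < \<bar>f x\<bar> powr p"
      using reals_Archimedean by (metis inverse_eq_divide)
    moreover have "x \<in> space M"
      using x sets.sets_into_space[of B M] by auto
    ultimately have "x \<in> B \<inter> S n"
      using x by (simp add: S_def)
    then show "x \<in> (\<Union>n. B \<inter> S n)"
      by blast
  qed
  ultimately have "B \<in> null_sets M"
    using \<open>B \<in> sets M\<close> by (meson null_sets_subset)
  then show False
    using B(1) by (auto simp: is_atom_def)
qed

text \<open>A non-null part of \<open>{f \<noteq> 0}\<close> outside \<open>\<Union>C\<close> would contain an atom; that atom has
  finite measure because \<open>f \<in> Lp M p\<close>, so it is almost equal to a member of \<open>C\<close>, which it misses.\<close>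
lemma Lp_ae_zero_outside_atoms:
  fixes f :: "'a \<Rightarrow> real"
  assumes p: "p > 0" and atomic: "atomic_measure M" and f: "f \<in> Lp M p"
    and C: "finite C" "C \<subseteq> sets M"
    and C_atoms: "\<And>B. is_atom M B \<Longrightarrow> emeasure M B = \<infinity> \<or> (\<exists>A\<in>C. emeasure M ((A - B) \<union> (B - A)) = 0)"
  shows "AE x in M. x \<notin> \<Union>C \<longrightarrow> f x = 0"
proof -
  have [measurable]: "\<Union>C \<in> sets M" "f \<in> borel_measurable M"
    using C f by (auto simp: Lp_def)
  define E where "E = {x\<in>space M. x \<notin> \<Union>C \<and> f x \<noteq> 0}"
  have [measurable]: "E \<in> sets M"
    unfolding E_def by measurable
  have "E \<in> null_sets M"
  proof (rule ccontr)
    assume "E \<notin> null_sets M"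
    then have "0 < emeasure M E"
      by (simp add: null_sets_def zero_less_iff_neq_zero)
    then obtain B where B: "B \<subseteq> E" "is_atom M B"
      using atomic \<open>E \<in> sets M\<close> unfolding atomic_measure_def by blast
    then have "emeasure M B < \<infinity>"
      using is_atom_in_Lp_support_finite[OF p f] by (auto simp: E_def)
    then obtain A where A: "A \<in> C" "emeasure M ((A - B) \<union> (B - A)) = 0"
      using C_atoms[OF B(2)] by auto
    have "B \<subseteq> (A - B) \<union> (B - A)"
      using B(1) A(1) by (auto simp: E_def)
    moreover have "B \<in> sets M" "A \<in> sets M"
      using B(2) A(1) C(2) by (auto simp: is_atom_def)
    ultimately have "B \<in> null_sets M"
      using A(2) by (blast intro: null_sets_subset)
    then show False
      using B(2) by (auto simp: is_atom_def)
  qed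
  then show ?thesis
    by (rule AE_I') (auto simp: E_def)
qed

definition indicator_basis :: "'a measure \<Rightarrow> real \<Rightarrow> nat \<Rightarrow> (nat \<Rightarrow> 'a set) \<Rightarrow> bool" where
  "indicator_basis M p n D \<longleftrightarrow> (\<forall>i<n. D i \<in> sets M \<and> emeasure M (D i) < \<infinity>)
     \<and> disjoint_family_on D {..<n}
     \<and> (\<forall>f\<in>Lp M p. \<exists>c. AE x in M. f x = (\<Sum>i<n. c i * indicator (D i) x))"

lemma indicator_basis_if_indivisible:
  assumes D: "\<And>i. i < n \<Longrightarrow> indivisible M (D i)" "\<And>i. i < n \<Longrightarrow> emeasure M (D i) < \<infinity>"
    and disj: "disjoint_family_on D {..<n}"
    and outside: "\<And>f. f \<in> Lp M p \<Longrightarrow> AE x in M. x \<notin> (\<Union>i<n. D i) \<longrightarrow> f x = 0"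
  shows "indicator_basis M p n D"
  unfolding indicator_basis_def
proof (intro conjI ballI allI impI disj)
  fix i assume "i < n"
  then show "D i \<in> sets M" "emeasure M (D i) < \<infinity>"
    using D by (auto simp: indivisible_def)
next
  fix f :: "'a \<Rightarrow> real" assume f: "f \<in> Lp M p"
  then have "\<forall>i\<in>{..<n}. \<exists>c. AE x in M. x \<in> D i \<longrightarrow> f x = c"
    using indivisible_ae_const[OF D(1)] by (simp add: Lp_def)
  then obtain c where "\<forall>i\<in>{..<n}. AE x in M. x \<in> D i \<longrightarrow> f x = c i"
    by metis
  then have "AE x in M. \<forall>i\<in>{..<n}. x \<in> D i \<longrightarrow> f x = c i"
    by (intro AE_finite_allI) auto
  with outside[OF f] have "AE x in M. f x = (\<Sum>i<n. c i * indicator (D i) x)"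
  proof eventually_elim
    case (elim x)
    show ?case
    proof (cases "\<exists>i<n. x \<in> D i")
      case True
      then obtain i where i: "i < n" "x \<in> D i"
        by blast
      then show ?thesis
        using elim sum_indicator_disjoint_family_on[OF disj i, of c] by simp
    next
      case False
      then show ?thesis
        using elim sum_indicator_outside[of n x D c] by auto
    qed
  qed
  then show "\<exists>c. AE x in M. f x = (\<Sum>i<n. c i * indicator (D i) x)"
    by blast
qed

lemma indicator_basis_if_finitely_many_finite_atoms:
  assumes p: "p > 0" and atomic: "atomic_measure M" and atoms: "finitely_many_finite_atoms M"
  shows "\<exists>n D. indicator_basis M p n D"
proof -
  obtain C where C: "finite C" "\<forall>A\<in>C. is_atom M A \<and> emeasure M A < \<infinity>"
    "\<forall>B. is_atom M B \<longrightarrow> emeasure M B = \<infinity> \<or> (\<exists>A\<in>C. emeasure M ((A - B) \<union> (B - A)) = 0)"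
    using atoms unfolding finitely_many_finite_atoms_def by blast
  obtain n :: nat and g where g: "C = g ` {i. i < n}"
    using finite_imp_nat_seg_image_inj_on[OF C(1)] by blast
  define A where "A i = (if i < n then g i else {})" for i
  define D where "D = disjointed A"
  have A: "is_atom M (A i) \<and> emeasure M (A i) < \<infinity>" if "i < n" for i
    using that C(2) g by (auto simp: A_def)
  have "A i \<in> sets M" for i
    using A[of i] by (cases "i < n") (auto simp: A_def is_atom_def)
  then have D_sets: "D i \<in> sets M" for i
    using sets.range_disjointed_sets[of A M] by (auto simp: D_def)
  have D_sub: "D i \<subseteq> A i" for i
    by (simp add: D_def disjointed_subset)
  have "(\<Union>i<n. D i) = (\<Union>i<n. A i)"
    unfolding D_def using finite_UN_disjointed_eq[of A n] by (simp add: atLeast0LessThan)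
  also have "\<dots> = \<Union>C"
    using g by (auto simp: A_def)
  finally have D_Union: "(\<Union>i<n. D i) = \<Union>C" .
  show ?thesis
  proof (intro exI indicator_basis_if_indivisible)
    fix i assume "i < n"
    then show "indivisible M (D i)"
      using indivisible_subset[OF is_atom_imp_indivisible D_sets D_sub] A by blast
    show "emeasure M (D i) < \<infinity>"
      using emeasure_mono[OF D_sub] A[OF \<open>i < n\<close>] \<open>A i \<in> sets M\<close> le_less_trans by blast
  next
    show "disjoint_family_on D {..<n}"
      using disjoint_family_disjointed[of A] unfolding D_def disjoint_family_on_def by blast
  next
    fix f :: "'a \<Rightarrow> real" assume "f \<in> Lp M p"
    then show "AE x in M. x \<notin> (\<Union>i<n. D i) \<longrightarrow> f x = 0"
      unfolding D_Union using C by (intro Lp_ae_zero_outside_atoms[OF p atomic]) (auto simp: is_atom_def)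
  qed
qed

lemma indicator_Lp:
  assumes "A \<in> sets M" "emeasure M A < \<infinity>" "p > 0"
  shows "(indicator A :: 'a \<Rightarrow> real) \<in> Lp M p"
proof -
  have "(\<integral>\<^sup>+ x. ennreal (\<bar>indicator A x :: real\<bar> powr p) \<partial>M) = (\<integral>\<^sup>+ x. indicator A x \<partial>M)"
    using assms(3) by (intro nn_integral_cong) (auto simp: indicator_def)
  then show ?thesis
    using assms unfolding Lp_def by auto
qed

lemma Lp_findim_if_indicator_basis:
  assumes p: "p > 0" and basis: "indicator_basis M p n D"
  shows "Lp_findim M p"
proof -
  define S where "S = (\<lambda>i. indicator (D i) :: 'a \<Rightarrow> real) ` {..<n}"
  have "S \<subseteq> Lp M p"
    using basis p by (auto simp: S_def indicator_basis_def intro!: indicator_Lp)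
  moreover have "\<exists>c. AE x in M. f x = (\<Sum>g\<in>S. c g * g x)" if "f \<in> Lp M p" for f
  proof -
    obtain c where c: "AE x in M. f x = (\<Sum>i<n. c i * indicator (D i) x)"
      using basis \<open>f \<in> Lp M p\<close> unfolding indicator_basis_def by blast
    \<comment> \<open>coefficients of coinciding indicators are added up\<close>
    define c' where "c' g = (\<Sum>i\<in>{i\<in>{..<n}. indicator (D i) = g}. c i)" for g :: "'a \<Rightarrow> real"
    have "(\<Sum>i<n. c i * indicator (D i) x) = (\<Sum>g\<in>S. c' g * g x)" for x
    proof -
      have "(\<Sum>i<n. c i * indicator (D i) x) =
          (\<Sum>g\<in>S. \<Sum>i\<in>{i\<in>{..<n}. indicator (D i) = g}. c i * indicator (D i) x)"
        unfolding S_def by (rule sum.image_gen) simp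
      also have "\<dots> = (\<Sum>g\<in>S. c' g * g x)"
        unfolding c'_def sum_distrib_right by (intro sum.cong refl) auto
      finally show ?thesis .
    qed
    then show ?thesis
      using c by auto
  qed
  ultimately show ?thesis
    unfolding Lp_findim_def by (intro exI[of _ S]) (auto simp: S_def)
qed

lemma indicator_sum_in_G_simple:
  assumes D: "\<And>i. i < n \<Longrightarrow> D i \<in> sets M" "disjoint_family_on D {..<n}"
    and h: "h \<in> Lp M p" "\<And>x. x \<in> space M \<Longrightarrow> h x = (\<Sum>i<n. c i * indicator (D i) x)"
  shows "h \<in> G_simple M p (Suc n)"
proof -
  define A where "A i = (if i < n then D i else space M - (\<Union>j<n. D j))" for i
  define a where "a i = (if i < n then c i else 0)" for i
  have A_sets: "A i \<in> sets M" for i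
    using D by (auto simp: A_def)
  have "disjoint_family_on A {..<Suc n}"
    unfolding disjoint_family_on_def
  proof (intro ballI impI)
    fix i j assume "i \<in> {..<Suc n}" "j \<in> {..<Suc n}" "i \<noteq> j"
    then show "A i \<inter> A j = {}"
      using D(2) by (cases "i < n"; cases "j < n") (auto simp: A_def disjoint_family_on_def)
  qed
  moreover have "(\<Union>i<Suc n. A i) = space M"
  proof -
    have "(\<Union>i<n. A i) = (\<Union>i<n. D i)" "A n = space M - (\<Union>j<n. D j)"
      by (simp_all add: A_def)
    then have "(\<Union>i<Suc n. A i) = (space M - (\<Union>j<n. D j)) \<union> (\<Union>i<n. D i)"
      by (simp add: lessThan_Suc)
    moreover have "(\<Union>i<n. D i) \<subseteq> space M"
      using D(1) sets.sets_into_space by blast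
    ultimately show ?thesis
      by blast
  qed
  moreover have "h x = (\<Sum>i<Suc n. a i * indicator (A i) x)" if "x \<in> space M" for x
    using h(2)[OF that] by (simp add: a_def A_def)
  ultimately show ?thesis
    unfolding G_simple_def using h(1) A_sets
    by (intro CollectI conjI exI[of _ "Suc n"] exI[of _ A] exI[of _ a]) auto
qed

lemma N_approx_le:
  assumes "k \<ge> 1" "\<And>f. f \<in> S \<Longrightarrow> \<exists>h\<in>G_simple M p k. Lp_norm M p (\<lambda>x. f x - h x) \<le> \<epsilon>"
  shows "N_approx M p \<epsilon> S \<le> enat k"
  unfolding N_approx_def using assms by (intro INF_lower) auto

lemma unif_approx_if_indicator_basis:
  assumes basis: "indicator_basis M p n D"
  shows "unif_approx M p (Lp_ball M p)"
  unfolding unif_approx_def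
proof (intro allI impI)
  fix \<epsilon> :: real assume "\<epsilon> > 0"
  have "\<exists>h\<in>G_simple M p (Suc n). Lp_norm M p (\<lambda>x. f x - h x) \<le> \<epsilon>" if "f \<in> Lp_ball M p" for f
  proof -
    have f: "f \<in> Lp M p"
      using that by (simp add: Lp_ball_def)
    then obtain c where c: "AE x in M. f x = (\<Sum>i<n. c i * indicator (D i) x)"
      using basis unfolding indicator_basis_def by blast
    define h where "h x = (\<Sum>i<n. c i * indicator (D i) x)" for x
    have D: "\<And>i. i < n \<Longrightarrow> D i \<in> sets M" "disjoint_family_on D {..<n}"
      using basis by (auto simp: indicator_basis_def)
    then have [measurable]: "h \<in> borel_measurable M"
      unfolding h_def by measurable
    have "(\<integral>\<^sup>+ x. ennreal (\<bar>h x\<bar> powr p) \<partial>M) = (\<integral>\<^sup>+ x. ennreal (\<bar>f x\<bar> powr p) \<partial>M)"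
      using c by (intro nn_integral_cong_AE) (auto simp: h_def)
    then have "h \<in> G_simple M p (Suc n)"
      using f D by (intro indicator_sum_in_G_simple) (auto simp: Lp_def h_def)
    moreover have "Lp_norm M p (\<lambda>x. f x - h x) = 0"
    proof -
      have "(\<integral>\<^sup>+ x. ennreal (\<bar>f x - h x\<bar> powr p) \<partial>M) = (\<integral>\<^sup>+ x. 0 \<partial>M)"
        using c by (intro nn_integral_cong_AE) (auto simp: h_def)
      then show ?thesis
        by (simp add: Lp_norm_def)
    qed
    ultimately show ?thesis
      using \<open>\<epsilon> > 0\<close> by (intro bexI[of _ h]) auto
  qed
  then have "N_approx M p \<epsilon> (Lp_ball M p) \<le> enat (Suc n)"
    by (intro N_approx_le) auto
  then show "N_approx M p \<epsilon> (Lp_ball M p) < \<infinity>"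
    using enat_ord_simps(4) le_less_trans by blast
qed

section \<open>Disjoint sequences of sets of finite positive measure\<close>

definition disjoint_positive_seq :: "'a measure \<Rightarrow> (nat \<Rightarrow> 'a set) \<Rightarrow> bool" where
  "disjoint_positive_seq M E \<longleftrightarrow> disjoint_family E \<and>
     (\<forall>n. E n \<in> sets M \<and> emeasure M (E n) < \<infinity> \<and> 0 < measure M (E n))"

lemma measure_pos_iff_emeasure_pos:
  assumes "emeasure M A < \<infinity>"
  shows "0 < measure M A \<longleftrightarrow> 0 < emeasure M A"
  using assms emeasure_eq_ennreal_measure[of M A] by (auto simp: less_top[symmetric])

lemma not_is_atom_imp_smaller_subset:
  assumes "A \<in> sets M" "0 < emeasure M A" "\<not> is_atom M A"
  shows "\<exists>D\<in>sets M. D \<subseteq> A \<and> 0 < emeasure M D \<and> emeasure M D < emeasure M A"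
  using assms unfolding is_atom_def by (auto simp: zero_less_iff_neq_zero)

lemma exists_half_subset_if_no_atoms:
  assumes no_atom: "\<And>B. B \<subseteq> C \<Longrightarrow> \<not> is_atom M B"
    and C: "C \<in> sets M" "emeasure M C < \<infinity>" "0 < measure M C"
  shows "\<exists>D\<in>sets M. D \<subseteq> C \<and> 0 < measure M D \<and> 2 * measure M D \<le> measure M C"
proof -
  obtain D where D: "D \<in> sets M" "D \<subseteq> C" "0 < emeasure M D" "emeasure M D < emeasure M C"
    using not_is_atom_imp_smaller_subset[OF C(1) _ no_atom] C measure_pos_iff_emeasure_pos by blast
  have D_fin: "emeasure M D < \<infinity>"
    using D(4) C(2) by order
  have D_pos: "0 < measure M D"
    using D(3) D_fin measure_pos_iff_emeasure_pos by blast
  have smaller: "measure M D < measure M C"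
    using D(4) C(2) D_fin by (simp add: emeasure_eq_ennreal_measure less_top[symmetric] ennreal_less_iff)
  have complement: "measure M (C - D) = measure M C - measure M D"
    using C D D_fin by (intro measure_Diff) (auto simp: less_top[symmetric])
  show ?thesis
  proof (cases "2 * measure M D \<le> measure M C")
    case True
    then show ?thesis
      using D D_pos by blast
  next
    case False
    then show ?thesis
      using C D smaller complement by (intro bexI[of _ "C - D"]) auto
  qed
qed

lemma disjoint_positive_seq_of_shrinking:
  assumes C: "decseq C" "\<And>n. C n \<in> sets M" "emeasure M (C 0) < \<infinity>"
    and shrink: "\<And>n. measure M (C (Suc n)) < measure M (C n)"
  shows "disjoint_positive_seq M (\<lambda>n. C n - C (Suc n))"
  unfolding disjoint_positive_seq_def
proof (intro conjI allI)
  have fin: "emeasure M (C n) < \<infinity>" for n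
    using emeasure_mono[OF decseqD[OF C(1), of 0 n] C(2)] C(3) by simp
  show "disjoint_family (\<lambda>n. C n - C (Suc n))"
    unfolding disjoint_family_on_def
  proof (intro ballI impI)
    fix m n :: nat assume "m \<noteq> n"
    then consider "m < n" | "n < m"
      by linarith
    then show "(C m - C (Suc m)) \<inter> (C n - C (Suc n)) = {}"
    proof cases
      case 1
      then show ?thesis
        using decseqD[OF C(1), of "Suc m" n] by auto
    next
      case 2
      then show ?thesis
        using decseqD[OF C(1), of "Suc n" m] by auto
    qed
  qed
  fix n
  show "C n - C (Suc n) \<in> sets M"
    using C(2) by auto
  show "emeasure M (C n - C (Suc n)) < \<infinity>"
    using emeasure_mono[of "C n - C (Suc n)" "C n" M] fin[of n] C(2) by auto
  have "measure M (C n - C (Suc n)) = measure M (C n) - measure M (C (Suc n))"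
    using C fin by (intro measure_Diff) (auto simp: less_top[symmetric] decseq_Suc_iff)
  then show "0 < measure M (C n - C (Suc n))"
    using shrink[of n] by simp
qed

text \<open>Inside a set without atoms, halving repeatedly gives a strictly shrinking chain.\<close>
lemma disjoint_positive_seq_if_not_atomic:
  assumes "\<not> atomic_measure M"
  shows "\<exists>E. disjoint_positive_seq M E"
proof -
  obtain A where A: "A \<in> sets M" "0 < emeasure M A" and no_atom: "\<And>B. B \<subseteq> A \<Longrightarrow> \<not> is_atom M B"
    using assms unfolding atomic_measure_def by blast
  obtain C0 where C0: "C0 \<in> sets M" "C0 \<subseteq> A" "emeasure M C0 < \<infinity>" "0 < measure M C0"
  proof (cases "emeasure M A < \<infinity>")
    case True
    then show ?thesis
      using that[of A] A measure_pos_iff_emeasure_pos by blast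
  next
    case False
    obtain D where "D \<in> sets M" "D \<subseteq> A" "0 < emeasure M D" "emeasure M D < emeasure M A"
      using not_is_atom_imp_smaller_subset[OF A no_atom] by blast
    moreover from this False have "emeasure M D < \<infinity>"
      by (simp add: less_top[symmetric])
    ultimately show ?thesis
      using that[of D] measure_pos_iff_emeasure_pos by blast
  qed
  define P where "P n C \<longleftrightarrow> C \<in> sets M \<and> C \<subseteq> C0 \<and> 0 < measure M C" for n :: nat and C
  have step: "\<exists>D. P (Suc n) D \<and> D \<subseteq> B \<and> 2 * measure M D \<le> measure M B" if "P n B" for n B
  proof -
    have "emeasure M B < \<infinity>"
      using that C0 emeasure_mono[of B C0 M] by (auto simp: P_def)
    then show ?thesis
      using exists_half_subset_if_no_atoms[of B M] that no_atom C0 by (fastforce simp: P_def)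
  qed
  have "P 0 C0"
    using C0 by (simp add: P_def)
  then obtain C where C: "\<And>n. P n (C n)"
    and halves: "\<And>n. C (Suc n) \<subseteq> C n \<and> 2 * measure M (C (Suc n)) \<le> measure M (C n)"
    using dependent_nat_choice[of P "\<lambda>n B D. D \<subseteq> B \<and> 2 * measure M D \<le> measure M B", OF _ step]
    by blast
  have "disjoint_positive_seq M (\<lambda>n. C n - C (Suc n))"
  proof (rule disjoint_positive_seq_of_shrinking)
    show "decseq C"
      using halves by (simp add: decseq_Suc_iff)
    show "C n \<in> sets M" "measure M (C (Suc n)) < measure M (C n)" for n
      using C[of n] C[of "Suc n"] halves[of n] by (auto simp: P_def)
    show "emeasure M (C 0) < \<infinity>"
      using C[of 0] C0 emeasure_mono[of "C 0" C0 M] by (auto simp: P_def)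
  qed
  then show ?thesis
    by blast
qed

lemma finite_atoms_Int_null:
  assumes A: "is_atom M A" "emeasure M A < \<infinity>" and B: "is_atom M B" "emeasure M B < \<infinity>"
    and AB: "emeasure M ((A - B) \<union> (B - A)) \<noteq> 0"
  shows "A \<inter> B \<in> null_sets M"
proof (rule ccontr)
  assume nonnull: "A \<inter> B \<notin> null_sets M"
  have sets: "A \<in> sets M" "B \<in> sets M"
    using A B by (auto simp: is_atom_def)
  have "A - B \<in> null_sets M" if "is_atom M A" "emeasure M A < \<infinity>" "B \<in> sets M"
    "A \<inter> B \<notin> null_sets M" for A B
  proof -
    have "A \<in> sets M"
      using that by (simp add: is_atom_def)
    moreover have "emeasure M (A \<inter> B) \<noteq> 0"
      using that \<open>A \<in> sets M\<close> by (simp add: null_sets_def)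
    ultimately have "\<not> emeasure M (A \<inter> B) < emeasure M A"
      using that(1,3) unfolding is_atom_def by blast
    then have "emeasure M (A \<inter> B) = emeasure M A"
      using emeasure_mono[of "A \<inter> B" A M] \<open>A \<in> sets M\<close> by simp
    then show ?thesis
      using that \<open>A \<in> sets M\<close> emeasure_Diff[of M "A \<inter> B" A]
      by (auto simp: Diff_Int diff_eq_0_iff_ennreal)
  qed
  from this[OF A sets(2) nonnull] this[OF B sets(1)] nonnull
  have "(A - B) \<union> (B - A) \<in> null_sets M"
    by (auto simp: Int_commute)
  then show False
    using AB null_setsD1 by blast
qed

lemma disjoint_positive_seq_disjointed:
  assumes A: "\<And>n. A n \<in> sets M" "\<And>n. emeasure M (A n) < \<infinity>" "\<And>n. 0 < emeasure M (A n)"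
    and null: "\<And>j n. j < n \<Longrightarrow> A j \<inter> A n \<in> null_sets M"
  shows "disjoint_positive_seq M (disjointed A)"
  unfolding disjoint_positive_seq_def
proof (intro conjI allI disjoint_family_disjointed)
  fix n
  have "(\<Union>j\<in>{0..<n}. A j \<inter> A n) \<in> null_sets M"
    using null by (intro null_sets_UN') auto
  moreover have "disjointed A n = A n - (\<Union>j\<in>{0..<n}. A j \<inter> A n)"
    by (auto simp: disjointed_def)
  ultimately have eq: "emeasure M (disjointed A n) = emeasure M (A n)"
    using emeasure_Diff_null_set A(1) by metis
  show "disjointed A n \<in> sets M"
    using sets.range_disjointed_sets[of A M] A(1) by auto
  show "emeasure M (disjointed A n) < \<infinity>"
    using eq A(2) by simp
  show "0 < measure M (disjointed A n)"
    using eq A(2,3) measure_pos_iff_emeasure_pos[of M "disjointed A n"] by simp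
qed

lemma exists_seq_of_distinct_finite_atoms:
  assumes "\<not> finitely_many_finite_atoms M"
  shows "\<exists>A :: nat \<Rightarrow> 'a set. \<forall>n. is_atom M (A n) \<and> emeasure M (A n) < \<infinity> \<and>
    (\<forall>j<n. emeasure M ((A j - A n) \<union> (A n - A j)) \<noteq> 0)"
proof -
  define P where "P A n B \<longleftrightarrow> is_atom M B \<and> emeasure M B < \<infinity> \<and>
      (\<forall>j<n. emeasure M ((A j - B) \<union> (B - A j)) \<noteq> 0)" for A :: "nat \<Rightarrow> 'a set" and n B
  have extend: "\<exists>B. P A n B" if prev: "\<And>j. j < n \<Longrightarrow> P A j (A j)" for A :: "nat \<Rightarrow> 'a set" and n
  proof -
    have "\<forall>C\<in>A ` {..<n}. is_atom M C \<and> emeasure M C < \<infinity>"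
      using prev by (auto simp: P_def)
    then have "\<not> (\<forall>B. is_atom M B \<longrightarrow>
        emeasure M B = \<infinity> \<or> (\<exists>C\<in>A ` {..<n}. emeasure M ((C - B) \<union> (B - C)) = 0))"
      using assms unfolding finitely_many_finite_atoms_def by (meson finite_imageI finite_lessThan)
    then obtain B where "is_atom M B" "emeasure M B \<noteq> \<infinity>"
      "\<forall>C\<in>A ` {..<n}. emeasure M ((C - B) \<union> (B - C)) \<noteq> 0"
      by blast
    then show ?thesis
      by (auto simp: P_def less_top)
  qed
  have "\<exists>A. \<forall>n. P A n (A n)"
  proof (rule dependent_wellorder_choice)
    show "P f n B = P g n B" if "\<And>j. j < n \<Longrightarrow> f j = g j" for B f g n
      using that by (simp add: P_def)
  qed (rule extend)
  then show ?thesis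
    by (simp add: P_def)
qed

lemma disjoint_positive_seq_if_infinitely_many_atoms:
  assumes "\<not> finitely_many_finite_atoms M"
  shows "\<exists>E. disjoint_positive_seq M E"
proof -
  obtain A :: "nat \<Rightarrow> 'a set" where A: "\<And>n. is_atom M (A n)" "\<And>n. emeasure M (A n) < \<infinity>"
    and distinct: "\<And>j n. j < n \<Longrightarrow> emeasure M ((A j - A n) \<union> (A n - A j)) \<noteq> 0"
    using exists_seq_of_distinct_finite_atoms[OF assms] by blast
  have "disjoint_positive_seq M (disjointed A)"
  proof (rule disjoint_positive_seq_disjointed)
    show "A n \<in> sets M" "emeasure M (A n) < \<infinity>" "0 < emeasure M (A n)" for n
      using A by (auto simp: is_atom_def)
    show "A j \<inter> A n \<in> null_sets M" if "j < n" for j n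
      using A distinct[OF that] by (intro finite_atoms_Int_null)
  qed
  then show ?thesis
    by blast
qed

definition ratio_separated :: "real \<Rightarrow> (nat \<Rightarrow> real) \<Rightarrow> bool" where
  "ratio_separated K b \<longleftrightarrow> (\<forall>i j. i \<noteq> j \<longrightarrow> K * b i \<le> b j \<or> K * b j \<le> b i)"

lemma ratio_separated_if_growing:
  fixes b :: "nat \<Rightarrow> real"
  assumes K: "K \<ge> 1" and b: "\<And>n. b n \<ge> 0" and grow: "\<And>n. K * b n \<le> b (Suc n)"
  shows "ratio_separated K b"
proof -
  have "K * b i \<le> b j" if "Suc i \<le> j" for i j
    using that
  proof (induction j rule: dec_induct)
    case (step n)
    have "b n \<le> K * b n"
      using K b[of n] by (simp add: mult_le_cancel_right1)
    then show ?case
      using step.IH grow[of n] by linarith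
  qed (rule grow)
  then show ?thesis
    unfolding ratio_separated_def by (metis Suc_leI linorder_neqE_nat)
qed

lemma ratio_separated_if_shrinking:
  fixes b :: "nat \<Rightarrow> real"
  assumes K: "K \<ge> 1" and b: "\<And>n. b n \<ge> 0" and shrink: "\<And>n. K * b (Suc n) \<le> b n"
  shows "ratio_separated K b"
proof -
  have "K * b j \<le> b i" if "Suc i \<le> j" for i j
    using that
  proof (induction j rule: dec_induct)
    case (step n)
    have "b (Suc n) \<le> K * b (Suc n)"
      using K b[of "Suc n"] by (simp add: mult_le_cancel_right1)
    then show ?case
      using step.IH shrink[of n] K by (smt (verit) mult_left_mono)
  qed (rule shrink)
  then show ?thesis
    unfolding ratio_separated_def by (metis Suc_leI linorder_neqE_nat)
qed

lemma subseq_ratio_shrinking: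
  fixes e :: "nat \<Rightarrow> real"
  assumes pos: "\<And>n. 0 < e n" and K: "K > 0" and small: "\<And>\<delta> N. \<delta> > 0 \<Longrightarrow> \<exists>n>N. e n < \<delta>"
  shows "\<exists>r. strict_mono r \<and> (\<forall>n. K * e (r (Suc n)) \<le> e (r n))"
proof -
  have "\<exists>j. i < j \<and> K * e j \<le> e i" for i
  proof -
    obtain j where "j > i" "e j < e i / K"
      using small[of "e i / K" i] pos[of i] K by auto
    then show ?thesis
      using K by (intro exI[of _ j]) (simp add: field_simps)
  qed
  then obtain r where "\<forall>n. True \<and> r n < r (Suc n) \<and> K * e (r (Suc n)) \<le> e (r n)"
    using dependent_nat_choice[of "\<lambda>_ _. True" "\<lambda>_ i j. i < j \<and> K * e j \<le> e i"] by blast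
  then show ?thesis
    by (auto simp: strict_mono_Suc_iff)
qed

text \<open>Each block is made long enough that its total exceeds \<open>K\<close> times the previous one,
  which is possible because the terms are bounded below by \<open>\<delta>\<close>.\<close>
lemma blocks_ratio_growing:
  fixes e :: "nat \<Rightarrow> real"
  assumes \<delta>: "\<delta> > 0" and big: "\<And>i. s \<le> i \<Longrightarrow> \<delta> \<le> e i"
  shows "\<exists>a. strict_mono a \<and> s \<le> a 0 \<and>
    (\<forall>n. K * (\<Sum>i\<in>{a n..<a (Suc n)}. e i) \<le> (\<Sum>i\<in>{a (Suc n)..<a (Suc (Suc n))}. e i))"
proof -
  define P where "P n I \<longleftrightarrow> s \<le> fst I \<and> fst I < snd I" for n :: nat and I :: "nat \<times> nat"
  define Q where "Q n I J \<longleftrightarrow> fst J = snd I \<and>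
    K * (\<Sum>i\<in>{fst I..<snd I}. e i) \<le> (\<Sum>i\<in>{fst J..<snd J}. e i)" for n :: nat and I J
  have "\<exists>J. P (Suc n) J \<and> Q n I J" if "P n I" for n I
  proof -
    obtain lo hi where I: "I = (lo, hi)"
      by fastforce
    define L where "L = nat \<lceil>K * (\<Sum>i\<in>{lo..<hi}. e i) / \<delta>\<rceil> + 1"
    have "K * (\<Sum>i\<in>{lo..<hi}. e i) \<le> real L * \<delta>"
      using real_nat_ceiling_ge[of "K * (\<Sum>i\<in>{lo..<hi}. e i) / \<delta>"] \<delta>
      by (simp add: L_def field_simps)
    also have "\<dots> = (\<Sum>i\<in>{hi..<hi + L}. \<delta>)"
      by simp
    also have "\<dots> \<le> (\<Sum>i\<in>{hi..<hi + L}. e i)"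
      using that by (intro sum_mono big) (auto simp: P_def I)
    finally show ?thesis
      using that by (intro exI[of _ "(hi, hi + L)"]) (auto simp: P_def Q_def I L_def)
  qed
  moreover have "P 0 (s, Suc s)"
    by (simp add: P_def)
  ultimately obtain f where f: "\<forall>n. P n (f n) \<and> Q n (f n) (f (Suc n))"
    using dependent_nat_choice[of P Q] by blast
  have "s \<le> fst (f n)" "fst (f n) < fst (f (Suc n))"
    "K * (\<Sum>i\<in>{fst (f n)..<fst (f (Suc n))}. e i) \<le> (\<Sum>i\<in>{fst (f (Suc n))..<fst (f (Suc (Suc n)))}. e i)"
    for n
    using f[rule_format, of n] f[rule_format, of "Suc n"] by (auto simp: P_def Q_def)
  then show ?thesis
    by (intro exI[of _ "\<lambda>n. fst (f n)"]) (auto simp: strict_mono_Suc_iff)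
qed

lemma disjoint_positive_seq_subseq:
  assumes "disjoint_positive_seq M E" "strict_mono r"
  shows "disjoint_positive_seq M (E \<circ> r)"
  using assms strict_mono_eq[OF assms(2)]
  unfolding disjoint_positive_seq_def disjoint_family_on_def by auto

lemma disjoint_positive_seq_blocks:
  assumes E: "disjoint_positive_seq M E" and a: "strict_mono a"
  shows "disjoint_positive_seq M (\<lambda>n. \<Union>i\<in>{a n..<a (Suc n)}. E i)"
    and "measure M (\<Union>i\<in>{a n..<a (Suc n)}. E i) = (\<Sum>i\<in>{a n..<a (Suc n)}. measure M (E i))"
proof -
  have E_sets: "E i \<in> sets M" and E_fin: "emeasure M (E i) < \<infinity>" and E_pos: "0 < measure M (E i)"
    and E_disj: "disjoint_family E" for i
    using E by (auto simp: disjoint_positive_seq_def)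
  have measure_block: "measure M (\<Union>i\<in>{a n..<a (Suc n)}. E i) = (\<Sum>i\<in>{a n..<a (Suc n)}. measure M (E i))" for n
    using E_sets E_fin E_disj
    by (intro measure_finite_Union) (auto intro: disjoint_family_on_mono simp: less_top[symmetric])
  then show "measure M (\<Union>i\<in>{a n..<a (Suc n)}. E i) = (\<Sum>i\<in>{a n..<a (Suc n)}. measure M (E i))" .
  show "disjoint_positive_seq M (\<lambda>n. \<Union>i\<in>{a n..<a (Suc n)}. E i)"
    unfolding disjoint_positive_seq_def
  proof (intro conjI allI)
    have "(\<Union>i\<in>{a m..<a (Suc m)}. E i) \<inter> (\<Union>i\<in>{a n..<a (Suc n)}. E i) = {}" if "m < n" for m n
    proof -
      have "a (Suc m) \<le> a n"
        using that strict_mono_less_eq[OF a] by simp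
      have "E i \<inter> E j = {}" if "i \<in> {a m..<a (Suc m)}" "j \<in> {a n..<a (Suc n)}" for i j
      proof -
        have "i \<noteq> j"
          using that \<open>a (Suc m) \<le> a n\<close> by auto
        then show ?thesis
          using E_disj by (simp add: disjoint_family_on_def)
      qed
      then show ?thesis
        by blast
    qed
    then show "disjoint_family (\<lambda>n. \<Union>i\<in>{a n..<a (Suc n)}. E i)"
      unfolding disjoint_family_on_def by (metis Int_commute linorder_neqE_nat)
    fix n
    have "a n < a (Suc n)"
      using a by (simp add: strict_mono_Suc_iff)
    then show "0 < measure M (\<Union>i\<in>{a n..<a (Suc n)}. E i)"
      unfolding measure_block using E_pos by (intro sum_pos) auto
    show "(\<Union>i\<in>{a n..<a (Suc n)}. E i) \<in> sets M"
      using E_sets by auto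
    have "emeasure M (\<Union>i\<in>{a n..<a (Suc n)}. E i) \<le> (\<Sum>i\<in>{a n..<a (Suc n)}. emeasure M (E i))"
      using E_sets by (intro emeasure_subadditive_finite) auto
    also have "\<dots> < \<infinity>"
      using E_fin by simp
    finally show "emeasure M (\<Union>i\<in>{a n..<a (Suc n)}. E i) < \<infinity>" .
  qed
qed

text \<open>Measures with a subsequence tending to \<open>0\<close> give a rapidly shrinking subsequence;
  measures bounded below give rapidly growing unions of consecutive blocks.\<close>
lemma disjoint_positive_seq_ratio_separated:
  assumes E: "disjoint_positive_seq M E" and K: "K \<ge> 1"
  shows "\<exists>B. disjoint_positive_seq M B \<and> ratio_separated K (\<lambda>n. measure M (B n))"
proof (cases "\<forall>\<delta> N. \<delta> > 0 \<longrightarrow> (\<exists>n>N. measure M (E n) < \<delta>)")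
  case True
  then obtain r where r: "strict_mono r" "\<And>n. K * measure M (E (r (Suc n))) \<le> measure M (E (r n))"
    using subseq_ratio_shrinking[of "\<lambda>n. measure M (E n)" K] E K
    by (auto simp: disjoint_positive_seq_def)
  then show ?thesis
    using disjoint_positive_seq_subseq[OF E r(1)] ratio_separated_if_shrinking[OF K]
    by (intro exI[of _ "E \<circ> r"]) auto
next
  case False
  then obtain \<delta> N where \<delta>: "\<delta> > 0" and "\<forall>n>N. \<delta> \<le> measure M (E n)"
    by (meson not_less)
  then have big: "\<And>n. Suc N \<le> n \<Longrightarrow> \<delta> \<le> measure M (E n)"
    by (simp add: Suc_le_eq)
  obtain a where a: "strict_mono a" and grow: "\<And>n. K * (\<Sum>i\<in>{a n..<a (Suc n)}. measure M (E i))
      \<le> (\<Sum>i\<in>{a (Suc n)..<a (Suc (Suc n))}. measure M (E i))"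
    using blocks_ratio_growing[where e = "\<lambda>n. measure M (E n)" and K = K, OF \<delta> big] by blast
  show ?thesis
    using disjoint_positive_seq_blocks[OF E a] grow
    by (intro exI[of _ "\<lambda>n. \<Union>i\<in>{a n..<a (Suc n)}. E i"] conjI ratio_separated_if_growing[OF K])
      (auto intro: sum_nonneg)
qed

section \<open>Functions far from all simple functions with few values\<close>

lemma powr_abs_diff_le:
  fixes a b p :: real
  assumes "p > 0"
  shows "\<bar>a - b\<bar> powr p \<le> 2 powr p * (\<bar>a\<bar> powr p + \<bar>b\<bar> powr p)"
proof -
  have "\<bar>a - b\<bar> powr p \<le> (2 * max \<bar>a\<bar> \<bar>b\<bar>) powr p"
    using assms by (intro powr_mono2) auto
  also have "\<dots> = 2 powr p * max \<bar>a\<bar> \<bar>b\<bar> powr p"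
    by (simp add: powr_mult)
  also have "max \<bar>a\<bar> \<bar>b\<bar> powr p \<le> \<bar>a\<bar> powr p + \<bar>b\<bar> powr p"
    by (simp add: max_def)
  finally show ?thesis
    by simp
qed

lemma Lp_diff:
  assumes p: "p > 0" and f: "f \<in> Lp M p" and h: "h \<in> Lp M p"
  shows "(\<lambda>x. f x - h x) \<in> Lp M p"
proof -
  have [measurable]: "f \<in> borel_measurable M" "h \<in> borel_measurable M"
    using f h by (auto simp: Lp_def)
  have "(\<integral>\<^sup>+ x. ennreal (\<bar>f x - h x\<bar> powr p) \<partial>M)
      \<le> (\<integral>\<^sup>+ x. ennreal (2 powr p) * (ennreal (\<bar>f x\<bar> powr p) + ennreal (\<bar>h x\<bar> powr p)) \<partial>M)"
    using powr_abs_diff_le[OF p]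
    by (intro nn_integral_mono) (simp add: ennreal_leI flip: ennreal_mult ennreal_plus)
  also have "\<dots> = ennreal (2 powr p) *
      ((\<integral>\<^sup>+ x. ennreal (\<bar>f x\<bar> powr p) \<partial>M) + (\<integral>\<^sup>+ x. ennreal (\<bar>h x\<bar> powr p) \<partial>M))"
    by (simp add: nn_integral_cmult nn_integral_add)
  also have "\<dots> < \<infinity>"
    using f h by (simp add: Lp_def ennreal_mult_less_top)
  finally show ?thesis
    by (simp add: Lp_def)
qed

lemma relative_neighbourhoods_disjoint:
  fixes u w a \<delta> :: real
  assumes "0 < \<delta>" "\<delta> < 1" "0 < w" "(1 + \<delta>) / (1 - \<delta>) * w \<le> u"
  shows "\<not> (\<bar>u - a\<bar> < \<delta> * u \<and> \<bar>w - a\<bar> < \<delta> * w)"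
proof -
  have "(1 + \<delta>) * w \<le> (1 - \<delta>) * u"
    using assms mult_left_mono[OF assms(4), of "1 - \<delta>"] by (simp add: field_simps)
  then show ?thesis
    by (simp add: abs_less_iff algebra_simps)
qed

lemma card_relatively_close_le:
  fixes v a :: "nat \<Rightarrow> real"
  assumes \<delta>: "0 < \<delta>" "\<delta> < 1" and v: "\<And>j. 0 < v j"
    and sep: "ratio_separated ((1 + \<delta>) / (1 - \<delta>)) v"
  shows "card {j\<in>J. \<exists>i<l. \<bar>v j - a i\<bar> < \<delta> * v j} \<le> l"
proof -
  let ?G = "{j\<in>J. \<exists>i<l. \<bar>v j - a i\<bar> < \<delta> * v j}"
  define \<phi> where "\<phi> j = (SOME i. i < l \<and> \<bar>v j - a i\<bar> < \<delta> * v j)" for j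
  have \<phi>: "\<phi> j < l \<and> \<bar>v j - a (\<phi> j)\<bar> < \<delta> * v j" if "j \<in> ?G" for j
    unfolding \<phi>_def by (rule someI_ex) (use that in auto)
  have "inj_on \<phi> ?G"
  proof (rule inj_onI, rule ccontr)
    fix j j' assume jj: "j \<in> ?G" "j' \<in> ?G" "\<phi> j = \<phi> j'" "j \<noteq> j'"
    then show False
      using sep \<phi>[OF jj(1)] \<phi>[OF jj(2)] v
        relative_neighbourhoods_disjoint[OF \<delta>, of "v j" "v j'" "a (\<phi> j)"]
        relative_neighbourhoods_disjoint[OF \<delta>, of "v j'" "v j" "a (\<phi> j)"]
      unfolding ratio_separated_def by metis
  qed
  then have "card ?G \<le> card {..<l}"
    by (rule card_inj_on_le) (use \<phi> in auto)
  then show ?thesis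
    by simp
qed

lemma ratio_separated_inverse_root:
  fixes b :: "nat \<Rightarrow> real"
  assumes p: "p > 0" and R: "R > 0" and c: "c > 0" and b: "\<And>j. b j > 0"
    and sep: "ratio_separated (R powr p) b"
  shows "ratio_separated R (\<lambda>j. (c / b j) powr (1 / p))"
proof -
  have "R * (c / b j) powr (1 / p) \<le> (c / b i) powr (1 / p)" if "R powr p * b i \<le> b j" for i j
  proof -
    have "(R powr p * (c / b j)) powr (1 / p) = R * (c / b j) powr (1 / p)"
      using p R c b[of j] by (subst powr_mult) (simp_all add: powr_powr)
    then have "R * (c / b j) powr (1 / p) = (R powr p * (c / b j)) powr (1 / p)"
      by simp
    also have "\<dots> \<le> (c / b i) powr (1 / p)"
      using that p R c b[of i] b[of j] by (intro powr_mono2) (auto simp: field_simps)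
    finally show ?thesis .
  qed
  then show ?thesis
    using sep unfolding ratio_separated_def by blast
qed

lemma nn_integral_step_lower_bound:
  fixes w :: "nat \<Rightarrow> real" and g :: "'a \<Rightarrow> ennreal"
  assumes B: "\<And>j. j < m \<Longrightarrow> B j \<in> sets M" "disjoint_family_on B {..<m}"
    and below: "\<And>j x. j < m \<Longrightarrow> x \<in> B j \<Longrightarrow> x \<in> space M \<Longrightarrow> ennreal (w j) \<le> g x"
  shows "(\<Sum>j<m. ennreal (w j) * emeasure M (B j)) \<le> (\<integral>\<^sup>+ x. g x \<partial>M)"
proof -
  have "(\<integral>\<^sup>+ x. (\<Sum>j<m. ennreal (w j) * indicator (B j) x) \<partial>M)
      = (\<Sum>j<m. \<integral>\<^sup>+ x. ennreal (w j) * indicator (B j) x \<partial>M)"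
    using B(1) by (intro nn_integral_sum) auto
  also have "\<dots> = (\<Sum>j<m. ennreal (w j) * emeasure M (B j))"
    using B(1) by (simp add: nn_integral_cmult_indicator)
  finally have "(\<Sum>j<m. ennreal (w j) * emeasure M (B j))
      = (\<integral>\<^sup>+ x. (\<Sum>j<m. ennreal (w j) * indicator (B j) x) \<partial>M)" ..
  also have "\<dots> \<le> (\<integral>\<^sup>+ x. g x \<partial>M)"
  proof (rule nn_integral_mono)
    fix x assume "x \<in> space M"
    show "(\<Sum>j<m. ennreal (w j) * indicator (B j) x) \<le> g x"
    proof (cases "\<exists>j<m. x \<in> B j")
      case True
      then obtain j where j: "j < m" "x \<in> B j"
        by blast
      then show ?thesis
        using below \<open>x \<in> space M\<close> sum_indicator_disjoint_family_on[OF B(2) j, of "\<lambda>j. ennreal (w j)"]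
        by simp
    next
      case False
      then show ?thesis
        using sum_indicator_outside[of m x B] by simp
    qed
  qed
  finally show ?thesis .
qed

lemma nn_integral_powr_step_function:
  fixes v :: "nat \<Rightarrow> real"
  assumes B: "\<And>j. j < m \<Longrightarrow> B j \<in> sets M" "disjoint_family_on B {..<m}"
  shows "(\<integral>\<^sup>+ x. ennreal (\<bar>\<Sum>j<m. v j * indicator (B j) x\<bar> powr p) \<partial>M)
    = (\<Sum>j<m. ennreal (\<bar>v j\<bar> powr p) * emeasure M (B j))"
proof -
  have pointwise: "ennreal (\<bar>\<Sum>j<m. v j * indicator (B j) x\<bar> powr p)
      = (\<Sum>j<m. ennreal (\<bar>v j\<bar> powr p) * indicator (B j) x)" for x
  proof (cases "\<exists>j<m. x \<in> B j")
    case True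
    then obtain j where j: "j < m" "x \<in> B j"
      by blast
    then show ?thesis
      using sum_indicator_disjoint_family_on[OF B(2) j, of v]
        sum_indicator_disjoint_family_on[OF B(2) j, of "\<lambda>j. ennreal (\<bar>v j\<bar> powr p)"]
      by simp
  next
    case False
    then show ?thesis
      using sum_indicator_outside[of m x B v] sum_indicator_outside[of m x B "\<lambda>j. ennreal (\<bar>v j\<bar> powr p)"]
      by simp
  qed
  have "(\<integral>\<^sup>+ x. ennreal (\<bar>\<Sum>j<m. v j * indicator (B j) x\<bar> powr p) \<partial>M)
      = (\<integral>\<^sup>+ x. (\<Sum>j<m. ennreal (\<bar>v j\<bar> powr p) * indicator (B j) x) \<partial>M)"
    by (simp only: pointwise)
  also have "\<dots> = (\<Sum>j<m. \<integral>\<^sup>+ x. ennreal (\<bar>v j\<bar> powr p) * indicator (B j) x \<partial>M)"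
    using B(1) by (intro nn_integral_sum) auto
  also have "\<dots> = (\<Sum>j<m. ennreal (\<bar>v j\<bar> powr p) * emeasure M (B j))"
    using B(1) by (simp add: nn_integral_cmult_indicator)
  finally show ?thesis .
qed

lemma step_function_in_Lp_ball:
  fixes v :: "nat \<Rightarrow> real"
  assumes B: "\<And>j. B j \<in> sets M" "disjoint_family_on B {..<m}" "\<And>j. emeasure M (B j) = ennreal (b j)"
    and mass: "\<And>j. 0 \<le> v j" "\<And>j. 0 \<le> b j" "\<And>j. v j powr p * b j = 1 / real m" and m: "m \<ge> 1"
  shows "(\<lambda>x. \<Sum>j<m. v j * indicator (B j) x) \<in> Lp_ball M p"
proof -
  have [measurable]: "B j \<in> sets M" for j
    using B(1) .
  have "(\<integral>\<^sup>+ x. ennreal (\<bar>\<Sum>j<m. v j * indicator (B j) x\<bar> powr p) \<partial>M)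
      = (\<Sum>j<m. ennreal (\<bar>v j\<bar> powr p) * emeasure M (B j))"
    using B(1,2) by (rule nn_integral_powr_step_function)
  also have "\<dots> = (\<Sum>j<m. ennreal (1 / real m))"
    using mass by (simp add: B(3) flip: ennreal_mult)
  also have "\<dots> = 1"
    using m by (simp add: ennreal_of_nat_eq_real_of_nat flip: ennreal_mult)
  finally have "(\<integral>\<^sup>+ x. ennreal (\<bar>\<Sum>j<m. v j * indicator (B j) x\<bar> powr p) \<partial>M) = 1" .
  moreover have "(\<lambda>x. \<Sum>j<m. v j * indicator (B j) x) \<in> borel_measurable M"
    by measurable
  ultimately show ?thesis
    unfolding Lp_ball_def Lp_def Lp_norm_def by simp
qed

lemma G_simple_finite_range:
  assumes "h \<in> G_simple M p k"
  shows "\<exists>l a. l \<le> k \<and> (\<forall>x\<in>space M. \<exists>i<l. h x = a i)"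
proof -
  obtain l A a where l: "l \<le> k" and A: "disjoint_family_on A {..<l}" "(\<Union>i<l. A i) = space M"
    and h_eq: "\<forall>x\<in>space M. h x = (\<Sum>i<l. a i * indicator (A i) x)"
    using assms unfolding G_simple_def by blast
  have "\<exists>i<l. h x = a i" if x: "x \<in> space M" for x
  proof -
    obtain i where i: "i < l" "x \<in> A i"
      using x A(2) by blast
    have "h x = (\<Sum>i<l. a i * indicator (A i) x)"
      using h_eq x by blast
    also have "\<dots> = a i"
      by (rule sum_indicator_disjoint_family_on[OF A(1) i])
    finally show ?thesis
      using i(1) by blast
  qed
  then show ?thesis
    using l by blast
qed

lemma card_lessThan_Diff_ge:
  assumes "G \<subseteq> {..<m}" "card G \<le> k"
  shows "real m - real k \<le> real (card ({..<m} - G))"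
proof -
  have "card G \<le> m"
    using card_mono[OF _ assms(1)] by simp
  moreover have "card ({..<m} - G) = m - card G"
    using assms(1) by (simp add: card_Diff_subset finite_subset)
  ultimately show ?thesis
    using assms(2) by simp
qed

text \<open>Each value of \<open>h\<close> is relatively \<open>\<delta>\<close>-close to at most one \<open>v j\<close>, so at least
  \<open>m - k\<close> of the sets \<open>B j\<close> contribute \<open>\<delta>\<^sup>p / m\<close> each.\<close>
lemma nn_integral_step_function_distance:
  fixes v a :: "nat \<Rightarrow> real" and h :: "'a \<Rightarrow> real"
  assumes p: "p > 0" and \<delta>: "0 < \<delta>" "\<delta> < 1"
    and B: "\<And>j. B j \<in> sets M" "disjoint_family_on B {..<m}"
    and v: "\<And>j. 0 < v j" "ratio_separated ((1 + \<delta>) / (1 - \<delta>)) v"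
    and mass: "\<And>j. emeasure M (B j) = ennreal (b j)" "\<And>j. b j \<ge> 0" "\<And>j. v j powr p * b j = 1 / real m"
    and h: "l \<le> k" "\<And>x. x \<in> space M \<Longrightarrow> \<exists>i<l. h x = a i"
  shows "ennreal (\<delta> powr p * (real m - real k) / real m)
    \<le> (\<integral>\<^sup>+ x. ennreal (\<bar>(\<Sum>j<m. v j * indicator (B j) x) - h x\<bar> powr p) \<partial>M)"
proof -
  let ?f = "\<lambda>x. \<Sum>j<m. v j * indicator (B j) x"
  let ?G = "{j\<in>{..<m}. \<exists>i<l. \<bar>v j - a i\<bar> < \<delta> * v j}"
  define w where "w j = (if j \<in> ?G then 0 else (\<delta> * v j) powr p)" for j
  have "ennreal (w j) \<le> ennreal (\<bar>?f x - h x\<bar> powr p)" if jx: "j < m" "x \<in> B j" "x \<in> space M" for j x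
  proof (cases "j \<in> ?G")
    case False
    obtain i where i: "i < l" "h x = a i"
      using h(2)[OF jx(3)] by blast
    have "?f x = v j"
      by (rule sum_indicator_disjoint_family_on[OF B(2) jx(1,2)])
    moreover have "\<not> \<bar>v j - a i\<bar> < \<delta> * v j"
      using False jx(1) i(1) by blast
    ultimately have "\<delta> * v j \<le> \<bar>?f x - h x\<bar>"
      using i(2) by (simp add: not_less)
    then show ?thesis
      using False \<delta> v(1)[of j] p by (auto simp: w_def intro!: ennreal_leI powr_mono2)
  qed (simp add: w_def)
  then have "(\<Sum>j<m. ennreal (w j) * emeasure M (B j)) \<le> (\<integral>\<^sup>+ x. ennreal (\<bar>?f x - h x\<bar> powr p) \<partial>M)"
    using B by (intro nn_integral_step_lower_bound)
  moreover have "(\<Sum>j<m. ennreal (w j) * emeasure M (B j)) = ennreal (real (card ({..<m} - ?G)) * (\<delta> powr p / real m))"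
  proof -
    have "w j * b j = (if j \<in> ?G then 0 else \<delta> powr p / real m)" for j
      using \<delta> v(1)[of j] mass(3)[of j] by (simp add: w_def powr_mult mult.assoc)
    then have "(\<Sum>j<m. w j * b j) = (\<Sum>j\<in>{..<m} - ?G. \<delta> powr p / real m)"
      by (intro sum.mono_neutral_cong_right) auto
    moreover have "(\<Sum>j<m. ennreal (w j) * emeasure M (B j)) = ennreal (\<Sum>j<m. w j * b j)"
      using mass(2) by (simp add: mass(1) w_def flip: ennreal_mult)
    ultimately show ?thesis
      by simp
  qed
  moreover have "real m - real k \<le> real (card ({..<m} - ?G))"
    using card_relatively_close_le[OF \<delta> v, of "{..<m}" l a] h(1)
    by (intro card_lessThan_Diff_ge) auto
  then have "\<delta> powr p * (real m - real k) / real m \<le> real (card ({..<m} - ?G)) * (\<delta> powr p / real m)"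
    using mult_right_mono[of "real m - real k" "real (card ({..<m} - ?G))" "\<delta> powr p / real m"]
    by (simp add: mult.commute)
  ultimately show ?thesis
    by (metis (no_types, lifting) ennreal_leI order_trans)
qed

text \<open>The values \<open>v j\<close> are chosen so that each of the \<open>m\<close> sets \<open>B j\<close> carries \<open>1 / m\<close>
  of the \<open>p\<close>-th power of the norm of the witness.\<close>
lemma Lp_ball_far_from_G_simple:
  fixes M :: "'a measure" and B :: "nat \<Rightarrow> 'a set"
  assumes p: "p > 0" and \<delta>: "0 < \<delta>" "\<delta> < 1" and B: "disjoint_positive_seq M B"
    and sep: "ratio_separated (((1 + \<delta>) / (1 - \<delta>)) powr p) (\<lambda>j. measure M (B j))" and m: "m \<ge> 1"
  shows "\<exists>f\<in>Lp_ball M p. \<forall>h\<in>G_simple M p k.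
    \<delta> powr p * (real m - real k) / real m \<le> enn2real (\<integral>\<^sup>+ x. ennreal (\<bar>f x - h x\<bar> powr p) \<partial>M)"
proof -
  define b where "b j = measure M (B j)" for j
  define v where "v j = (1 / real m / b j) powr (1 / p)" for j
  have B_sets[measurable]: "\<And>j. B j \<in> sets M" and b_pos: "\<And>j. 0 < b j"
    and B_disj: "disjoint_family_on B {..<m}"
    using B by (auto simp: disjoint_positive_seq_def b_def disjoint_family_on_def)
  have B_meas: "emeasure M (B j) = ennreal (b j)" for j
    using B emeasure_eq_ennreal_measure[of M "B j"] by (simp add: disjoint_positive_seq_def b_def less_top)
  have v_pos: "0 < v j" for j
    using b_pos[of j] m by (simp add: v_def)
  have v_mass: "v j powr p * b j = 1 / real m" for j
    using b_pos[of j] m p by (simp add: v_def powr_powr)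
  have v_sep: "ratio_separated ((1 + \<delta>) / (1 - \<delta>)) v"
    unfolding v_def using m b_pos \<delta> sep
    by (intro ratio_separated_inverse_root[OF p]) (auto simp: b_def)
  define f where "f x = (\<Sum>j<m. v j * indicator (B j) x)" for x
  have f_ball: "f \<in> Lp_ball M p"
    unfolding f_def using B_sets B_disj B_meas v_pos b_pos v_mass m
    by (intro step_function_in_Lp_ball) (auto simp: less_imp_le)
  have "\<delta> powr p * (real m - real k) / real m \<le> enn2real (\<integral>\<^sup>+ x. ennreal (\<bar>f x - h x\<bar> powr p) \<partial>M)"
    if h: "h \<in> G_simple M p k" for h
  proof -
    obtain l a where "l \<le> k" "\<forall>x\<in>space M. \<exists>i<l. h x = a i"
      using G_simple_finite_range[OF h] by blast
    then have lower: "ennreal (\<delta> powr p * (real m - real k) / real m)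
        \<le> (\<integral>\<^sup>+ x. ennreal (\<bar>f x - h x\<bar> powr p) \<partial>M)"
      unfolding f_def using p \<delta> B_sets B_disj v_pos v_sep B_meas b_pos v_mass
      by (intro nn_integral_step_function_distance) (auto simp: less_imp_le)
    have "(\<lambda>x. f x - h x) \<in> Lp M p"
      using f_ball h by (intro Lp_diff[OF p]) (auto simp: Lp_ball_def G_simple_def)
    show ?thesis
    proof (cases "m \<le> k")
      case True
      then have "\<delta> powr p * (real m - real k) / real m \<le> 0"
        by (simp add: divide_nonpos_nonneg mult_nonneg_nonpos)
      then show ?thesis
        using enn2real_nonneg order_trans by blast
    next
      case False
      then show ?thesis
        using enn2real_mono[OF lower] \<open>(\<lambda>x. f x - h x) \<in> Lp M p\<close> \<delta> by (simp add: Lp_def)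
    qed
  qed
  then show ?thesis
    using f_ball by blast
qed

lemma N_approx_eq_infinity:
  assumes "\<And>k. k \<ge> 1 \<Longrightarrow> \<exists>f\<in>S. \<forall>h\<in>G_simple M p k. \<epsilon> < Lp_norm M p (\<lambda>x. f x - h x)"
  shows "N_approx M p \<epsilon> S = \<infinity>"
proof -
  have "\<not> (\<forall>f\<in>S. \<exists>h\<in>G_simple M p k. Lp_norm M p (\<lambda>x. f x - h x) \<le> \<epsilon>)" if k: "k \<ge> 1" for k
  proof -
    obtain f where "f \<in> S" "\<forall>h\<in>G_simple M p k. \<epsilon> < Lp_norm M p (\<lambda>x. f x - h x)"
      using assms[OF k] by blast
    then show ?thesis
      by (auto simp: not_le)
  qed
  then have empty: "{k::nat. k \<ge> 1 \<and>
      (\<forall>f\<in>S. \<exists>h\<in>G_simple M p k. Lp_norm M p (\<lambda>x. f x - h x) \<le> \<epsilon>)} = {}"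
    by blast
  show ?thesis
    unfolding N_approx_def empty by (simp add: top_enat_def)
qed

lemma N_approx_Lp_ball_infinite:
  assumes p: "p > 0" and \<epsilon>: "0 < \<epsilon>" "\<epsilon> < 1" and E: "disjoint_positive_seq M E"
  shows "N_approx M p \<epsilon> (Lp_ball M p) = \<infinity>"
proof (rule N_approx_eq_infinity)
  fix k :: nat
  define \<delta> where "\<delta> = (1 + \<epsilon>) / 2"
  have \<delta>: "0 < \<delta>" "\<delta> < 1" "\<epsilon> < \<delta>"
    using \<epsilon> by (auto simp: \<delta>_def)
  have "1 \<le> ((1 + \<delta>) / (1 - \<delta>)) powr p"
    using \<delta> p by (intro ge_one_powr_ge_zero) (auto simp: field_simps)
  then obtain B where B: "disjoint_positive_seq M B"
    and sep: "ratio_separated (((1 + \<delta>) / (1 - \<delta>)) powr p) (\<lambda>n. measure M (B n))"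
    using disjoint_positive_seq_ratio_separated[OF E] by blast
  define q where "q = (\<epsilon> / \<delta>) powr p"
  have "(\<epsilon> / \<delta>) powr p < 1 powr p"
    using \<epsilon> \<delta> p by (intro powr_less_mono2) auto
  then have q: "q < 1" "q * \<delta> powr p = \<epsilon> powr p"
    using \<epsilon> \<delta> by (auto simp: q_def powr_divide)
  obtain m :: nat where m: "m \<ge> 1" "real k < (1 - q) * real m"
  proof -
    obtain n :: nat where "real k / (1 - q) < real n"
      using reals_Archimedean2 by blast
    then show ?thesis
      using q(1) that[of "Suc n"] by (simp add: field_simps)
  qed
  obtain f where f: "f \<in> Lp_ball M p" and far: "\<And>h. h \<in> G_simple M p k \<Longrightarrow>
      \<delta> powr p * (real m - real k) / real m \<le> enn2real (\<integral>\<^sup>+ x. ennreal (\<bar>f x - h x\<bar> powr p) \<partial>M)"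
    using Lp_ball_far_from_G_simple[OF p \<delta>(1,2) B sep m(1)] by blast
  show "\<exists>f\<in>Lp_ball M p. \<forall>h\<in>G_simple M p k. \<epsilon> < Lp_norm M p (\<lambda>x. f x - h x)"
  proof (intro bexI[OF _ f] ballI)
    fix h assume h: "h \<in> G_simple M p k"
    have "\<epsilon> powr p * real m = \<delta> powr p * (q * real m)"
      using q(2) by (simp add: algebra_simps)
    also have "\<dots> < \<delta> powr p * (real m - real k)"
      using m(2) \<delta>(1) by (intro mult_strict_left_mono) (auto simp: algebra_simps)
    finally have "\<epsilon> powr p < \<delta> powr p * (real m - real k) / real m"
      using m(1) by (simp add: field_simps)
    also have "\<dots> \<le> enn2real (\<integral>\<^sup>+ x. ennreal (\<bar>f x - h x\<bar> powr p) \<partial>M)"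
      by (rule far[OF h])
    finally have "(\<epsilon> powr p) powr (1 / p) < enn2real (\<integral>\<^sup>+ x. ennreal (\<bar>f x - h x\<bar> powr p) \<partial>M) powr (1 / p)"
      using p \<epsilon> by (intro powr_less_mono2) auto
    then show "\<epsilon> < Lp_norm M p (\<lambda>x. f x - h x)"
      using p \<epsilon> by (simp add: Lp_norm_def powr_powr)
  qed
qed

section \<open>Infinite dimensionality\<close>

text \<open>The library has no \<open>real_vector\<close> instance for function spaces.\<close>
interpretation real_fun: vector_space "\<lambda>(c::real) (f::nat \<Rightarrow> real) x. c * f x"
  by unfold_locales (auto simp: fun_eq_iff algebra_simps)

lemma sum_fun_apply: "(\<Sum>g\<in>S. F g) x = (\<Sum>g\<in>S. F g x)"
  for F :: "'c \<Rightarrow> 'b \<Rightarrow> real"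
  by (induction S rule: infinite_finite_induct) auto

definition unit_vec :: "nat \<Rightarrow> nat \<Rightarrow> real" where
  "unit_vec i = (\<lambda>j. if j = i then 1 else 0)"

lemma inj_unit_vec: "inj unit_vec"
proof (rule injI)
  fix i j assume "unit_vec i = unit_vec j"
  then have "unit_vec i i = unit_vec j i"
    by simp
  then show "i = j"
    by (simp add: unit_vec_def split: if_splits)
qed

lemma independent_unit_vec: "real_fun.independent (unit_vec ` {..<m})"
proof (rule real_fun.independent_if_scalars_zero)
  fix a y assume sum0: "(\<Sum>x\<in>unit_vec ` {..<m}. (\<lambda>z. a x * x z)) = 0" and "y \<in> unit_vec ` {..<m}"
  then obtain i where i: "i < m" "y = unit_vec i"
    by auto
  have "0 = (\<Sum>x\<in>unit_vec ` {..<m}. (\<lambda>z. a x * x z)) i"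
    using sum0 by simp
  also have "\<dots> = (\<Sum>k<m. a (unit_vec k) * unit_vec k i)"
    using inj_unit_vec by (simp add: sum_fun_apply sum.reindex inj_on_subset)
  also have "\<dots> = a (unit_vec i)"
    using i(1) by (simp add: unit_vec_def if_distrib cong: if_cong)
  finally show "a y = 0"
    using i by simp
qed simp

text \<open>The unit vectors of \<open>\<real>\<^sup>m\<close> lie in the span of the rows indexed by \<open>S\<close>.\<close>
lemma card_ge_if_identity_factors:
  fixes G :: "'b \<Rightarrow> nat \<Rightarrow> real" and c :: "nat \<Rightarrow> 'b \<Rightarrow> real"
  assumes S: "finite S"
    and identity: "\<And>i j. i < m \<Longrightarrow> j < m \<Longrightarrow> (\<Sum>g\<in>S. c i g * G g j) = (if i = j then 1 else 0)"
  shows "m \<le> card S"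
proof -
  define row where "row g = (\<lambda>j. if j < m then G g j else 0)" for g
  have "unit_vec i \<in> real_fun.span (row ` S)" if "i < m" for i
  proof -
    have "unit_vec i = (\<Sum>g\<in>S. (\<lambda>j. c i g * row g j))"
    proof
      fix j
      show "unit_vec i j = (\<Sum>g\<in>S. (\<lambda>j. c i g * row g j)) j"
        using identity[OF that, of j] that by (cases "j < m") (auto simp: sum_fun_apply unit_vec_def row_def)
    qed
    also have "\<dots> \<in> real_fun.span (row ` S)"
      by (intro real_fun.span_sum real_fun.span_scale real_fun.span_base) auto
    finally show ?thesis .
  qed
  then have "card (unit_vec ` {..<m}) \<le> card (row ` S)"
    using S independent_unit_vec by (intro real_fun.independent_span_bound[THEN conjunct2]) auto
  also have "\<dots> \<le> card S"
    using S by (rule card_image_le)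
  finally show ?thesis
    using card_image[OF inj_on_subset[OF inj_unit_vec]] by simp
qed

lemma Diff_null_set_nonempty:
  assumes "E \<in> sets M" "E \<notin> null_sets M" "N \<in> null_sets M"
  shows "E - N \<noteq> {}"
  using assms by (metis Diff_eq_empty_iff null_sets_subset)

text \<open>Evaluating the almost everywhere identities for \<open>indicator (E i)\<close> at a point of each
  \<open>E j\<close> outside the exceptional null set yields an identity matrix factoring through \<open>S\<close>.\<close>
lemma not_Lp_findim_if_disjoint_positive_seq:
  assumes p: "p > 0" and E: "disjoint_positive_seq M E"
  shows "\<not> Lp_findim M p"
proof
  assume "Lp_findim M p"
  then obtain S where S: "finite S" "S \<subseteq> Lp M p"
    and span: "\<And>f. f \<in> Lp M p \<Longrightarrow> \<exists>c. AE x in M. f x = (\<Sum>g\<in>S. c g * g x)"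
    unfolding Lp_findim_def by blast
  define m where "m = Suc (card S)"
  have E_sets: "E j \<in> sets M" and E_fin: "emeasure M (E j) < \<infinity>" and E_pos: "0 < measure M (E j)"
    and E_disj: "disjoint_family E" for j
    using E by (auto simp: disjoint_positive_seq_def)
  have "\<forall>i\<in>{..<m}. \<exists>c. AE x in M. indicator (E i) x = (\<Sum>g\<in>S. c g * g x)"
    using span indicator_Lp[OF E_sets E_fin p] by blast
  then have "\<exists>c. \<forall>i\<in>{..<m}. AE x in M. indicator (E i) x = (\<Sum>g\<in>S. c i g * g x)"
    by (rule bchoice)
  then obtain c where "\<forall>i\<in>{..<m}. AE x in M. indicator (E i) x = (\<Sum>g\<in>S. c i g * g x)"
    ..
  then have "AE x in M. \<forall>i\<in>{..<m}. indicator (E i) x = (\<Sum>g\<in>S. c i g * g x)"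
    by (intro AE_finite_allI) auto
  then obtain N where N: "N \<in> null_sets M"
    and off_N: "\<And>x i. x \<in> space M - N \<Longrightarrow> i < m \<Longrightarrow> indicator (E i) x = (\<Sum>g\<in>S. c i g * g x)"
    by (auto elim!: AE_E)
  have "E j \<notin> null_sets M" for j
    using E_pos[of j] by (auto simp: measure_def)
  then have "E j - N \<noteq> {}" for j
    using Diff_null_set_nonempty E_sets N by blast
  define pt where "pt j = (SOME x. x \<in> E j - N)" for j
  have pt: "pt j \<in> E j - N" for j
    unfolding pt_def using some_in_eq[of "E j - N"] \<open>E j - N \<noteq> {}\<close> by simp
  have pt_space: "pt j \<in> space M - N" for j
    using pt[of j] sets.sets_into_space[OF E_sets] by blast
  have "(\<Sum>g\<in>S. c i g * g (pt j)) = (if i = j then 1 else 0)" if "i < m" "j < m" for i j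
  proof -
    have "pt j \<notin> E i" if "i \<noteq> j"
      using E_disj pt[of j] that by (auto simp: disjoint_family_on_def)
    then have "indicator (E i) (pt j) = (if i = j then 1 else (0::real))"
      using pt[of j] by auto
    then show ?thesis
      using off_N[OF pt_space \<open>i < m\<close>] by simp
  qed
  then have "m \<le> card S"
    using card_ge_if_identity_factors[OF S(1), of m c "\<lambda>g j. g (pt j)"] by blast
  then show False
    by (simp add: m_def)
qed

theorem theorem4p17:
  fixes M :: "'a measure" and p :: real
  assumes "p \<ge> 1"
    and "emeasure M (space M) \<noteq> 0"
  shows "(unif_approx M p (Lp_ball M p) \<longleftrightarrow> Lp_findim M p)
       \<and> (Lp_findim M p \<longleftrightarrow> atomic_measure M \<and> finitely_many_finite_atoms M)
       \<and> (\<not> unif_approx M p (Lp_ball M p) \<longrightarrow>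
            (\<forall>\<epsilon>. 0 < \<epsilon> \<and> \<epsilon> < 1 \<longrightarrow> N_approx M p \<epsilon> (Lp_ball M p) = \<infinity>))"
proof -
  \<comment> \<open>only \<open>p > 0\<close> is used\<close>
  have p: "p > 0"
    using assms(1) by simp
  show ?thesis
  proof (cases "atomic_measure M \<and> finitely_many_finite_atoms M")
    case True
    then obtain n D where "indicator_basis M p n D"
      using indicator_basis_if_finitely_many_finite_atoms[OF p] by blast
    then show ?thesis
      using True unif_approx_if_indicator_basis Lp_findim_if_indicator_basis[OF p] by blast
  next
    case False
    then obtain E where E: "disjoint_positive_seq M E"
      using disjoint_positive_seq_if_not_atomic disjoint_positive_seq_if_infinitely_many_atoms by blast
    have N_inf: "\<forall>\<epsilon>. 0 < \<epsilon> \<and> \<epsilon> < 1 \<longrightarrow> N_approx M p \<epsilon> (Lp_ball M p) = \<infinity>"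
      using N_approx_Lp_ball_infinite[OF p _ _ E] by blast
    then have "N_approx M p (1 / 2) (Lp_ball M p) = \<infinity>"
      by simp
    then have "\<not> unif_approx M p (Lp_ball M p)"
      unfolding unif_approx_def by (intro notI) (metis half_gt_zero less_irrefl zero_less_one)
    then show ?thesis
      using False N_inf not_Lp_findim_if_disjoint_positive_seq[OF p E] by blast
  qed
qed

end
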